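(* In the curved-exam game described in the context, fix a student $i$, an opponent profile $x_{-i}\in[0,1]^{n-1}$, an effort $x_i\in[0,1)$ and $\Delta x_i>0$ with $x_i+\Delta x_i<1$. Regard the difference $$\Delta\log U_i:=\log U_i(x_i+\Delta x_i,x_{-i};\alpha,m)-\log U_i(x_i,x_{-i};\alpha,m)$$ as a function of the parameters $(\alpha,m)=(\alpha_1,\dots,\alpha_n,m)\in(0,1)^{n+1}$. Then $\Delta\log U_i$ is non-increasing in the target mean $m$ and non-decreasing in each ability parameter $\alpha_j$, $j=1,\dots,n$ (wherever it is defined).
   Context: The curved-exam game: fix $n\ge2$, abilities $\alpha=(\alpha_1,\dots,\alpha_n)\in(0,1)^n$, target mean $m\in(0,1)$. Student $i$ chooses $x_i\in[0,1]$; $\bar x=\frac1n\sum_j x_j$, $\bar x_{-i}=\frac1{n-1}\sum_{j\neq i}x_j$. Grade $G_i(x;m)=x_i+\max(m-\bar x,0)$ (not truncated at 1); payoff $U_i(x;\alpha,m)=G_i(x;m)^{\alpha_i}(1-x_i)^{1-\alpha_i}$, with $\log 0=-\infty$. *)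

theory Defs
  imports Complex_Main
begin

text \<open>Profiles and abilities are functions on indices; only indices j < n matter.\<close>

definition xbar :: "nat \<Rightarrow> (nat \<Rightarrow> real) \<Rightarrow> real" where
  "xbar n x = (\<Sum>j<n. x j) / real n"

definition grade :: "nat \<Rightarrow> real \<Rightarrow> (nat \<Rightarrow> real) \<Rightarrow> nat \<Rightarrow> real" where
  "grade n m x i = x i + max (m - xbar n x) 0"

definition payoff :: "nat \<Rightarrow> (nat \<Rightarrow> real) \<Rightarrow> real \<Rightarrow> (nat \<Rightarrow> real) \<Rightarrow> nat \<Rightarrow> real" where
  "payoff n alpha m x i = grade n m x i powr alpha i * (1 - x i) powr (1 - alpha i)"

text \<open>Delta log U_i for an increase of x_i by d, as a function of (alpha, m).
  It is (finitely) defined exactly when both payoffs are positive.\<close>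

definition dlogU :: "nat \<Rightarrow> (nat \<Rightarrow> real) \<Rightarrow> real \<Rightarrow> (nat \<Rightarrow> real) \<Rightarrow> nat \<Rightarrow> real \<Rightarrow> real" where
  "dlogU n alpha m x i d = ln (payoff n alpha m (x(i := x i + d)) i) - ln (payoff n alpha m x i)"

definition dlogU_defined :: "nat \<Rightarrow> (nat \<Rightarrow> real) \<Rightarrow> real \<Rightarrow> (nat \<Rightarrow> real) \<Rightarrow> nat \<Rightarrow> real \<Rightarrow> bool" where
  "dlogU_defined n alpha m x i d \<longleftrightarrow>
     payoff n alpha m (x(i := x i + d)) i > 0 \<and> payoff n alpha m x i > 0"

end

theory Submission
  imports Defs
begin

text \<open>Write \<open>G\<^sub>i\<close>, \<open>G\<^sub>i'\<close> for the grades before and after the raise. Then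
  \<open>\<Delta>log U\<^sub>i = \<alpha>\<^sub>i (\<Delta>log G\<^sub>i - \<Delta>log (1 - x\<^sub>i)) + \<Delta>log (1 - x\<^sub>i)\<close> depends on the abilities only
  through \<open>\<alpha>\<^sub>i\<close>, affinely with non-negative slope: the raise increases the grade (the curve
  shrinks by at most \<open>\<Delta>x\<^sub>i/n\<close>) and decreases \<open>1 - x\<^sub>i\<close>. The target \<open>m\<close> enters only through
  \<open>G\<^sub>i'/G\<^sub>i\<close>, which is non-increasing in \<open>m\<close>: the raise lifts the class mean, so a higher
  target adds at most as much curve to \<open>G\<^sub>i'\<close> as to the smaller grade \<open>G\<^sub>i\<close>.\<close>

lemma ln_diff_le_ln_diff:
  fixes A B A' B' :: real
  assumes "0 < A" "A \<le> B" "0 \<le> B' - B" "B' - B \<le> A' - A"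
  shows "ln B' - ln A' \<le> ln B - ln A"
proof -
  have "(B' - B) * A \<le> (A' - A) * A"
    using assms by (intro mult_right_mono) auto
  also have "\<dots> \<le> (A' - A) * B"
    using assms by (intro mult_left_mono) auto
  finally have "B' * A \<le> B * A'"
    by (simp add: algebra_simps)
  moreover have "0 < A'" "0 < B" "0 < B'"
    using assms by auto
  ultimately have "ln (B' * A) \<le> ln (B * A')"
    using \<open>0 < A\<close> by simp
  then show ?thesis
    using \<open>0 < A\<close> \<open>0 < A'\<close> \<open>0 < B\<close> \<open>0 < B'\<close> by (simp add: ln_mult)
qed

lemma xbar_fun_upd:
  assumes "i < n"
  shows "xbar n (x(i := x i + d)) = xbar n x + d / real n"
proof -
  have "(\<Sum>j<n. (x(i := x i + d)) j) = (\<Sum>j<n. x j + (if j = i then d else 0))"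
    by (rule sum.cong) auto
  also have "\<dots> = (\<Sum>j<n. x j) + d"
    using assms by (simp add: sum.distrib)
  finally show ?thesis
    unfolding xbar_def by (simp add: add_divide_distrib)
qed

lemma grade_fun_upd_self:
  assumes "i < n"
  shows "grade n m (x(i := x i + d)) i = x i + d + max (m - xbar n x - d / real n) 0"
  using xbar_fun_upd[OF assms] unfolding grade_def by (simp add: algebra_simps)

lemma grade_le_grade_fun_upd_self:
  assumes "i < n" "0 \<le> d"
  shows "grade n m x i \<le> grade n m (x(i := x i + d)) i"
proof -
  have "d * 1 \<le> d * real n"
    using assms by (intro mult_left_mono) auto
  then have "d / real n \<le> d"
    using assms by (simp add: divide_le_eq)
  then show ?thesis
    using assms(2) unfolding grade_fun_upd_self[OF assms(1)] unfolding grade_def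
    by (simp add: max_def)
qed

lemma grade_mono_target:
  assumes "m1 \<le> m2"
  shows "grade n m1 x i \<le> grade n m2 x i"
  using assms unfolding grade_def by simp

lemma grade_increment_fun_upd_self_le:
  assumes "i < n" "0 \<le> d" "m1 \<le> m2"
  shows "grade n m2 (x(i := x i + d)) i - grade n m1 (x(i := x i + d)) i
     \<le> grade n m2 x i - grade n m1 x i"
proof -
  have "0 \<le> d / real n"
    using assms by simp
  then show ?thesis
    using assms(3) unfolding grade_fun_upd_self[OF assms(1)] unfolding grade_def
    by (simp add: max_def)
qed

text \<open>\<open>0 \<le> x i\<close> is needed: \<open>powr\<close> of a negative base is not \<open>0\<close>.\<close>

lemma grade_pos_if_payoff_pos:
  assumes "0 < payoff n alpha m x i" "0 \<le> x i"
  shows "0 < grade n m x i"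
proof -
  have "grade n m x i \<noteq> 0"
    using assms(1) unfolding payoff_def by auto
  moreover have "0 \<le> grade n m x i"
    using assms(2) unfolding grade_def by simp
  ultimately show ?thesis
    by simp
qed

lemma ln_payoff:
  assumes "0 < grade n m x i" "x i < 1"
  shows "ln (payoff n alpha m x i) = alpha i * ln (grade n m x i) + (1 - alpha i) * ln (1 - x i)"
  using assms unfolding payoff_def by (simp add: ln_mult ln_powr)

lemma dlogU_eq:
  assumes "dlogU_defined n alpha m x i d" "0 \<le> x i" "0 \<le> d" "x i + d < 1"
  shows "dlogU n alpha m x i d
    = alpha i * (ln (grade n m (x(i := x i + d)) i) - ln (grade n m x i))
      + (1 - alpha i) * (ln (1 - (x i + d)) - ln (1 - x i))"
proof -
  let ?x' = "x(i := x i + d)"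
  have "0 < grade n m x i" "0 < grade n m ?x' i"
    using assms grade_pos_if_payoff_pos unfolding dlogU_defined_def by auto
  then show ?thesis
    using assms unfolding dlogU_def by (simp add: ln_payoff algebra_simps)
qed

lemma dlogU_antimono_target:
  assumes "i < n" "0 \<le> x i" "0 \<le> d" "x i + d < 1" "0 \<le> alpha i" "m1 \<le> m2"
    and "dlogU_defined n alpha m1 x i d" "dlogU_defined n alpha m2 x i d"
  shows "dlogU n alpha m2 x i d \<le> dlogU n alpha m1 x i d"
proof -
  let ?x' = "x(i := x i + d)"
  have "0 < grade n m1 x i"
    using assms grade_pos_if_payoff_pos unfolding dlogU_defined_def by auto
  then have "ln (grade n m2 ?x' i) - ln (grade n m2 x i) \<le> ln (grade n m1 ?x' i) - ln (grade n m1 x i)"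
    using assms
    by (intro ln_diff_le_ln_diff grade_le_grade_fun_upd_self grade_increment_fun_upd_self_le)
      (auto simp: grade_mono_target)
  then show ?thesis
    using assms by (simp add: dlogU_eq mult_left_mono)
qed

lemma dlogU_mono_ability:
  assumes "i < n" "0 \<le> x i" "0 \<le> d" "x i + d < 1" "alpha i \<le> alpha' i"
    and "dlogU_defined n alpha m x i d" "dlogU_defined n alpha' m x i d"
  shows "dlogU n alpha m x i d \<le> dlogU n alpha' m x i d"
proof -
  define grade_gain where "grade_gain = ln (grade n m (x(i := x i + d)) i) - ln (grade n m x i)"
  define leisure_gain where "leisure_gain = ln (1 - (x i + d)) - ln (1 - x i)"
  have "0 < grade n m x i"
    using assms grade_pos_if_payoff_pos unfolding dlogU_defined_def by auto
  moreover have "grade n m x i \<le> grade n m (x(i := x i + d)) i"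
    using assms by (intro grade_le_grade_fun_upd_self)
  ultimately have "0 \<le> grade_gain"
    unfolding grade_gain_def by simp
  moreover have "leisure_gain \<le> 0"
    using assms unfolding leisure_gain_def by simp
  ultimately have "alpha i * (grade_gain - leisure_gain) \<le> alpha' i * (grade_gain - leisure_gain)"
    using assms by (intro mult_right_mono) auto
  then show ?thesis
    using assms
    by (simp add: dlogU_eq flip: grade_gain_def leisure_gain_def) (simp add: algebra_simps)
qed

theorem mainTheorem3:
  fixes n i :: nat and x :: "nat \<Rightarrow> real" and d :: real
  assumes n2: "n \<ge> 2" and i: "i < n"
    and opp: "\<forall>j<n. j \<noteq> i \<longrightarrow> 0 \<le> x j \<and> x j \<le> 1"
    and xi: "0 \<le> x i" "x i < 1"
    and d: "d > 0" "x i + d < 1"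
  shows
    "(\<forall>alpha m1 m2. (\<forall>j<n. 0 < alpha j \<and> alpha j < 1) \<and> 0 < m1 \<and> m1 \<le> m2 \<and> m2 < 1
        \<and> dlogU_defined n alpha m1 x i d \<and> dlogU_defined n alpha m2 x i d
        \<longrightarrow> dlogU n alpha m2 x i d \<le> dlogU n alpha m1 x i d)
   \<and> (\<forall>alpha alpha' m j. j < n \<and> (\<forall>k<n. 0 < alpha k \<and> alpha k < 1)
        \<and> (\<forall>k<n. 0 < alpha' k \<and> alpha' k < 1)
        \<and> (\<forall>k<n. k \<noteq> j \<longrightarrow> alpha' k = alpha k) \<and> alpha j \<le> alpha' j
        \<and> 0 < m \<and> m < 1
        \<and> dlogU_defined n alpha m x i d \<and> dlogU_defined n alpha' m x i d
        \<longrightarrow> dlogU n alpha m x i d \<le> dlogU n alpha' m x i d)"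
proof (intro conjI allI impI)
  fix alpha :: "nat \<Rightarrow> real" and m1 m2 :: real
  assume "(\<forall>j<n. 0 < alpha j \<and> alpha j < 1) \<and> 0 < m1 \<and> m1 \<le> m2 \<and> m2 < 1
        \<and> dlogU_defined n alpha m1 x i d \<and> dlogU_defined n alpha m2 x i d"
  then show "dlogU n alpha m2 x i d \<le> dlogU n alpha m1 x i d"
    using i xi d by (intro dlogU_antimono_target) auto
next
  fix alpha alpha' :: "nat \<Rightarrow> real" and m :: real and j :: nat
  assume H: "j < n \<and> (\<forall>k<n. 0 < alpha k \<and> alpha k < 1)
        \<and> (\<forall>k<n. 0 < alpha' k \<and> alpha' k < 1)
        \<and> (\<forall>k<n. k \<noteq> j \<longrightarrow> alpha' k = alpha k) \<and> alpha j \<le> alpha' j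
        \<and> 0 < m \<and> m < 1
        \<and> dlogU_defined n alpha m x i d \<and> dlogU_defined n alpha' m x i d"
  then have "alpha i \<le> alpha' i"
    using i by (cases "j = i") auto
  then show "dlogU n alpha m x i d \<le> dlogU n alpha' m x i d"
    using H i xi d by (intro dlogU_mono_ability) auto
qed

end
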